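(* Let $p,q$ be positive integers with $2\le p/q<4$, let $G$ be a connected graph with a fixed orientation, and let $f,g$ be two $(p,q)$-colourings of $G$. Let $T$ be a spanning tree of $G$ rooted at a vertex $u$, and for each vertex $v$ and $h\in\{f,g\}$ let $\mathrm{wt}(v,\varphi_h)=\varphi_h(P_v)$, where $P_v$ is the $(u,v)$-path in $T$ traversed from $u$ to $v$. Let $X=\{v:\mathrm{wt}(v,\varphi_f)\le\mathrm{wt}(v,\varphi_g)\}$ and $\overline{X}=V(G)\setminus X$. If both $D_f[X]$ and $D_f[\overline{X}]$ contain a directed cycle, then $f$ does not reconfigure to $g$.
   Context: A $(p,q)$-colouring of $G$ is a map $f:V(G)\to\{0,\dots,p-1\}$ with $q\le|f(u)-f(v)|\le p-q$ for every edge $uv$. $f$ reconfigures to $g$ if there is a sequence of $(p,q)$-colourings from $f$ to $g$ with consecutive ones differing on at most one vertex. For an arc $e=\overrightarrow{xy}$, $\varphi_h(e)=h(y)-h(x)\bmod p$. For a path $P$ with a chosen direction of traversal, $\varphi_h(P)$ is the sum (in $\mathbb{Z}$) of $\varphi_h(e)$ over edges $e$ of $P$ oriented along the traversal and of $p-\varphi_h(e)$ over edges oriented against it. $D_f$ is the digraph on $V(G)$ with an arc $\overrightarrow{xy}$ whenever $xy\in E(G)$ and $f(y)-f(x)\equiv q\pmod p$. *)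

theory Defs
  imports Main
begin

definition simple_graph :: "'a set \<Rightarrow> ('a \<Rightarrow> 'a \<Rightarrow> bool) \<Rightarrow> bool" where
  "simple_graph V E \<longleftrightarrow> finite V \<and> (\<forall>x y. E x y \<longrightarrow> x \<in> V \<and> y \<in> V \<and> x \<noteq> y \<and> E y x)"

definition is_path :: "('a \<Rightarrow> 'a \<Rightarrow> bool) \<Rightarrow> 'a list \<Rightarrow> bool" where
  "is_path E xs \<longleftrightarrow> xs \<noteq> [] \<and> distinct xs \<and> (\<forall>i. Suc i < length xs \<longrightarrow> E (xs ! i) (xs ! Suc i))"

definition is_uv_path :: "('a \<Rightarrow> 'a \<Rightarrow> bool) \<Rightarrow> 'a \<Rightarrow> 'a \<Rightarrow> 'a list \<Rightarrow> bool" where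
  "is_uv_path E u v xs \<longleftrightarrow> is_path E xs \<and> hd xs = u \<and> last xs = v"

definition connected_graph :: "'a set \<Rightarrow> ('a \<Rightarrow> 'a \<Rightarrow> bool) \<Rightarrow> bool" where
  "connected_graph V E \<longleftrightarrow> V \<noteq> {} \<and> (\<forall>x\<in>V. \<forall>y\<in>V. \<exists>xs. is_uv_path E x y xs)"

definition has_cycle :: "('a \<Rightarrow> 'a \<Rightarrow> bool) \<Rightarrow> bool" where
  "has_cycle E \<longleftrightarrow> (\<exists>xs. is_path E xs \<and> length xs \<ge> 3 \<and> E (last xs) (hd xs))"

definition spanning_tree :: "'a set \<Rightarrow> ('a \<Rightarrow> 'a \<Rightarrow> bool) \<Rightarrow> ('a \<Rightarrow> 'a \<Rightarrow> bool) \<Rightarrow> bool" where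
  "spanning_tree V E T \<longleftrightarrow> (\<forall>x y. T x y \<longrightarrow> E x y \<and> T y x) \<and> connected_graph V T \<and> \<not> has_cycle T"

definition orientation :: "('a \<Rightarrow> 'a \<Rightarrow> bool) \<Rightarrow> ('a \<Rightarrow> 'a \<Rightarrow> bool) \<Rightarrow> bool" where
  "orientation E ori \<longleftrightarrow> (\<forall>x y. ori x y \<longrightarrow> E x y) \<and> (\<forall>x y. E x y \<longrightarrow> (ori x y \<longleftrightarrow> \<not> ori y x))"

definition pq_colouring :: "int \<Rightarrow> int \<Rightarrow> 'a set \<Rightarrow> ('a \<Rightarrow> 'a \<Rightarrow> bool) \<Rightarrow> ('a \<Rightarrow> int) \<Rightarrow> bool" where
  "pq_colouring p q V E f \<longleftrightarrow> (\<forall>v\<in>V. 0 \<le> f v \<and> f v \<le> p - 1) \<and>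
     (\<forall>u v. E u v \<longrightarrow> q \<le> \<bar>f u - f v\<bar> \<and> \<bar>f u - f v\<bar> \<le> p - q)"

definition recol_step :: "int \<Rightarrow> int \<Rightarrow> 'a set \<Rightarrow> ('a \<Rightarrow> 'a \<Rightarrow> bool) \<Rightarrow> ('a \<Rightarrow> int) \<Rightarrow> ('a \<Rightarrow> int) \<Rightarrow> bool" where
  "recol_step p q V E f g \<longleftrightarrow> pq_colouring p q V E f \<and> pq_colouring p q V E g \<and>
     card {v\<in>V. f v \<noteq> g v} \<le> 1"

definition reconfigures :: "int \<Rightarrow> int \<Rightarrow> 'a set \<Rightarrow> ('a \<Rightarrow> 'a \<Rightarrow> bool) \<Rightarrow> ('a \<Rightarrow> int) \<Rightarrow> ('a \<Rightarrow> int) \<Rightarrow> bool" where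
  "reconfigures p q V E f g \<longleftrightarrow> (recol_step p q V E)\<^sup>*\<^sup>* f g"

definition phi_arc :: "int \<Rightarrow> ('a \<Rightarrow> int) \<Rightarrow> 'a \<Rightarrow> 'a \<Rightarrow> int" where
  "phi_arc p h x y = (h y - h x) mod p"

definition phi_step :: "int \<Rightarrow> ('a \<Rightarrow> 'a \<Rightarrow> bool) \<Rightarrow> ('a \<Rightarrow> int) \<Rightarrow> 'a \<Rightarrow> 'a \<Rightarrow> int" where
  "phi_step p ori h a b = (if ori a b then phi_arc p h a b else p - phi_arc p h b a)"

definition phi_path :: "int \<Rightarrow> ('a \<Rightarrow> 'a \<Rightarrow> bool) \<Rightarrow> ('a \<Rightarrow> int) \<Rightarrow> 'a list \<Rightarrow> int" where
  "phi_path p ori h xs = (\<Sum>i<length xs - 1. phi_step p ori h (xs ! i) (xs ! Suc i))"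

definition wt :: "int \<Rightarrow> ('a \<Rightarrow> 'a \<Rightarrow> bool) \<Rightarrow> ('a \<Rightarrow> 'a \<Rightarrow> bool) \<Rightarrow> 'a \<Rightarrow> ('a \<Rightarrow> int) \<Rightarrow> 'a \<Rightarrow> int" where
  "wt p ori T u h v = phi_path p ori h (THE xs. is_uv_path T u v xs)"

definition Df_arc :: "int \<Rightarrow> int \<Rightarrow> ('a \<Rightarrow> 'a \<Rightarrow> bool) \<Rightarrow> ('a \<Rightarrow> int) \<Rightarrow> 'a \<Rightarrow> 'a \<Rightarrow> bool" where
  "Df_arc p q E f x y \<longleftrightarrow> E x y \<and> (f y - f x) mod p = q mod p"

definition has_dicycle_in :: "('a \<Rightarrow> 'a \<Rightarrow> bool) \<Rightarrow> 'a set \<Rightarrow> bool" where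
  "has_dicycle_in D S \<longleftrightarrow> (\<exists>xs. length xs \<ge> 2 \<and> distinct xs \<and> set xs \<subseteq> S \<and>
      (\<forall>i. Suc i < length xs \<longrightarrow> D (xs ! i) (xs ! Suc i)) \<and> D (last xs) (hd xs))"

end

theory Submission
  imports Defs
begin

text \<open>
  For a \<open>(p,q)\<close>-colouring \<open>h\<close> the orientation is irrelevant: traversing an edge from \<open>a\<close> to \<open>b\<close>
  contributes \<open>(h b - h a) mod p\<close> to \<open>\<phi>\<^sub>h\<close>. Since \<open>p < 4q\<close>, recolouring a single vertex \<open>w\<close> leaves
  \<open>\<phi>\<^sub>h(P)\<close> unchanged on every path through which \<open>w\<close> only passes, and if \<open>w\<close> is the root \<open>u\<close> it
  shifts \<open>\<phi>\<^sub>h(P\<^sub>v)\<close> by the same amount for all \<open>v \<noteq> u\<close>. A vertex of a directed cycle of \<open>D\<^sub>f\<close>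
  cannot be recoloured while the rest of the cycle keeps its \<open>f\<close>-colours, because its two
  cycle-neighbours, coloured \<open>c - q\<close> and \<open>c + q\<close>, leave only the colour \<open>c\<close>. So along a
  reconfiguration sequence from \<open>f\<close> both cycles stay fixed and \<open>wt(v,\<phi>\<^sub>h) - wt(v,\<phi>\<^sub>f)\<close> is one
  constant on their vertices; it cannot be \<open>\<ge> 0\<close> on the cycle in \<open>X\<close> and \<open>< 0\<close> on the other.
\<close>

section \<open>Paths in spanning trees\<close>

lemma is_path_iff_successively:
  "is_path E xs \<longleftrightarrow> xs \<noteq> [] \<and> distinct xs \<and> successively E xs"
  unfolding is_path_def successively_conv_nth by blast

lemma is_uv_path_mono:
  assumes "\<And>x y. T x y \<Longrightarrow> E x y" and "is_uv_path T u v xs"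
  shows "is_uv_path E u v xs"
  using assms unfolding is_uv_path_def is_path_def by blast

lemma distinct_hd_eq_last:
  assumes "xs \<noteq> []" "distinct xs" "hd xs = last xs"
  shows "xs = [hd xs]"
  using assms by (cases xs; cases "tl xs" rule: rev_cases) auto

lemma hd_last_split:
  assumes "xs \<noteq> []" "hd xs = u" "last xs = v" "u \<noteq> v"
  obtains m where "xs = u # m @ [v]"
  using assms by (cases xs; cases "tl xs" rule: rev_cases) auto

lemma has_cycle_if_internally_disjoint_paths:
  assumes sym: "\<And>x y. T x y \<Longrightarrow> T y x"
    and xs: "is_uv_path T u v xs" and ys: "is_uv_path T u v ys"
    and "xs \<noteq> ys" and disjoint: "set xs \<inter> set ys \<subseteq> {u, v}"
  shows "has_cycle T"
proof -
  from xs ys have px: "distinct xs" "successively T xs"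
    and py: "distinct ys" "successively T ys"
    by (auto simp: is_uv_path_def is_path_iff_successively)
  have "u \<noteq> v"
    using distinct_hd_eq_last[of xs] distinct_hd_eq_last[of ys] xs ys \<open>xs \<noteq> ys\<close>
    by (auto simp: is_uv_path_def is_path_def)
  with xs ys obtain k m where k: "xs = u # k @ [v]" and m: "ys = u # m @ [v]"
    by (metis hd_last_split is_uv_path_def is_path_def)
  show ?thesis
  proof (cases "m = []")
    case True
    \<comment> \<open>then \<open>ys\<close> is the single edge \<open>uv\<close>, which closes \<open>xs\<close> into a cycle\<close>
    with k m \<open>xs \<noteq> ys\<close> have "length xs \<ge> 3" by (cases k) auto
    moreover have "T (last xs) (hd xs)" using py True k m sym by simp
    ultimately show ?thesis using xs unfolding has_cycle_def is_uv_path_def by blast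
  next
    case False
    let ?zs = "xs @ rev m"
    have "distinct ?zs" using px py disjoint k m \<open>u \<noteq> v\<close> by auto
    moreover have "successively T ?zs"
    proof -
      have "successively T (m @ [v])" using py m by (simp add: successively_Cons)
      then have "successively T (rev m)" and "T v (hd (rev m))"
        using False sym by (auto simp: successively_append_iff hd_rev intro: successively_mono)
      then have "successively T ((u # k @ [v]) @ rev m)"
        using px k unfolding successively_append_iff by simp
      then show ?thesis using k by simp
    qed
    moreover have "length ?zs \<ge> 3" using k False by (cases m) auto
    moreover have "T (last ?zs) (hd ?zs)"
      using py m False sym k by (cases m) (auto simp: last_rev)
    moreover have "?zs \<noteq> []" using k by simp
    ultimately show ?thesis unfolding has_cycle_def is_path_iff_successively by blast
  qed
qed

lemma tree_path_unique:
  assumes sym: "\<And>x y. T x y \<Longrightarrow> T y x" and acyclic: "\<not> has_cycle T"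
  shows "is_uv_path T u v xs \<Longrightarrow> is_uv_path T u v ys \<Longrightarrow> xs = ys"
proof (induction "length xs + length ys" arbitrary: u v xs ys rule: less_induct)
  case less
  show ?case
  proof (cases "\<exists>w \<in> set xs \<inter> set ys. w \<noteq> u \<and> w \<noteq> v")
    case True
    then obtain w a b c d where w: "w \<noteq> u" "w \<noteq> v"
      and xs: "xs = a @ w # b" and ys: "ys = c @ w # d"
      by (metis IntE split_list)
    have "a \<noteq> []" "b \<noteq> []" "c \<noteq> []" "d \<noteq> []"
      using less.prems w xs ys by (auto simp: is_uv_path_def is_path_def)
    moreover have "is_uv_path T u w (a @ [w])" "is_uv_path T u w (c @ [w])"
      "is_uv_path T w v (w # b)" "is_uv_path T w v (w # d)"
      using less.prems xs ys calculation
      by (auto simp: is_uv_path_def is_path_iff_successively successively_append_iff)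
    moreover have "length (a @ [w]) + length (c @ [w]) < length xs + length ys"
      and "length (w # b) + length (w # d) < length xs + length ys"
      using calculation(1-4) xs ys by auto
    ultimately have "a @ [w] = c @ [w]" "w # b = w # d"
      using less.hyps by blast+
    then show ?thesis using xs ys by simp
  next
    case False
    then have "set xs \<inter> set ys \<subseteq> {u, v}" by blast
    then show ?thesis
      using has_cycle_if_internally_disjoint_paths[OF sym less.prems] acyclic by blast
  qed
qed

lemma spanning_tree_path:
  assumes "spanning_tree V E T" and "u \<in> V" and "v \<in> V"
  shows "is_uv_path E u v (THE xs. is_uv_path T u v xs)"
proof -
  have sub: "\<And>x y. T x y \<Longrightarrow> E x y" and sym: "\<And>x y. T x y \<Longrightarrow> T y x"
    and conn: "connected_graph V T" and acyclic: "\<not> has_cycle T"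
    using assms(1) unfolding spanning_tree_def by blast+
  obtain xs where xs: "is_uv_path T u v xs"
    using conn assms(2,3) unfolding connected_graph_def by blast
  have "\<exists>!xs. is_uv_path T u v xs"
    using xs tree_path_unique[OF sym acyclic] by (intro ex1I)
  then have "is_uv_path T u v (THE xs. is_uv_path T u v xs)" by (rule theI')
  then show ?thesis by (rule is_uv_path_mono[rotated]) (rule sub)
qed

section \<open>\<open>\<phi>\<close> along paths of a colouring\<close>

lemma mod_eq_if_abs_less:
  fixes d p :: int
  assumes "\<bar>d\<bar> < p"
  shows "d mod p = (if 0 \<le> d then d else d + p)"
proof (cases "0 \<le> d")
  case False
  have "d mod p = (d + p) mod p" by simp
  also have "\<dots> = d + p" using assms False by (intro mod_pos_pos_trivial) auto
  finally show ?thesis using False by simp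
qed (use assms in simp)

text \<open>
  In the next two lemmas both sides are congruent modulo \<open>p\<close> (to \<open>b - a\<close>, resp. \<open>w - w'\<close>)
  and lie in an interval of length \<open>2p - 4q < p\<close>.
\<close>

lemma gap_sum_independent_of_middle:
  fixes p q a b w w' :: int
  assumes "0 < q" "p < 4 * q"
    and "q \<le> \<bar>w - a\<bar>" "\<bar>w - a\<bar> \<le> p - q" "q \<le> \<bar>b - w\<bar>" "\<bar>b - w\<bar> \<le> p - q"
    and "q \<le> \<bar>w' - a\<bar>" "\<bar>w' - a\<bar> \<le> p - q" "q \<le> \<bar>b - w'\<bar>" "\<bar>b - w'\<bar> \<le> p - q"
  shows "(w - a) mod p + (b - w) mod p = (w' - a) mod p + (b - w') mod p"
  using assms by (auto simp: mod_eq_if_abs_less abs_if split: if_splits)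

lemma gap_difference_independent_of_end:
  fixes p q y z w w' :: int
  assumes "0 < q" "p < 4 * q"
    and "q \<le> \<bar>y - w\<bar>" "\<bar>y - w\<bar> \<le> p - q" "q \<le> \<bar>z - w\<bar>" "\<bar>z - w\<bar> \<le> p - q"
    and "q \<le> \<bar>y - w'\<bar>" "\<bar>y - w'\<bar> \<le> p - q" "q \<le> \<bar>z - w'\<bar>" "\<bar>z - w'\<bar> \<le> p - q"
  shows "(y - w') mod p - (y - w) mod p = (z - w') mod p - (z - w) mod p"
  using assms by (auto simp: mod_eq_if_abs_less abs_if split: if_splits)

lemma colour_between_q_steps_unique:
  fixes p q x y w w' :: int
  assumes "0 < q" "2 * q \<le> p" "p < 4 * q"
    and "(w - x) mod p = q" "(y - w) mod p = q"
    and "\<bar>w - x\<bar> < p" "\<bar>y - w\<bar> < p"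
    and "0 \<le> w" "w < p" "0 \<le> w'" "w' < p"
    and "q \<le> \<bar>w' - x\<bar>" "\<bar>w' - x\<bar> \<le> p - q" "q \<le> \<bar>y - w'\<bar>" "\<bar>y - w'\<bar> \<le> p - q"
  shows "w' = w"
  using assms by (simp add: mod_eq_if_abs_less split: if_splits)

lemma simple_graph_edge:
  assumes "simple_graph V E" and "E a b"
  shows "a \<in> V" "b \<in> V" "a \<noteq> b"
  using assms unfolding simple_graph_def by blast+

lemma pq_colouring_range:
  "pq_colouring p q V E h \<Longrightarrow> v \<in> V \<Longrightarrow> 0 \<le> h v \<and> h v < p"
  unfolding pq_colouring_def by force

lemma pq_colouring_edge:
  assumes "pq_colouring p q V E h" and "E a b"
  shows "q \<le> \<bar>h b - h a\<bar>" and "\<bar>h b - h a\<bar> \<le> p - q"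
  using assms unfolding pq_colouring_def by (metis abs_minus_commute)+

lemma phi_step_edge:
  assumes "pq_colouring p q V E h" and "E a b" and "0 < q"
  shows "phi_step p ori h a b = (h b - h a) mod p"
proof -
  have "0 < \<bar>h b - h a\<bar>" "\<bar>h b - h a\<bar> < p"
    using pq_colouring_edge[OF assms(1,2)] assms(3) by linarith+
  then have "(h a - h b) mod p \<noteq> 0"
    using dvd_imp_le_int[of "h a - h b" p] by (auto simp: abs_minus_commute)
  then have "p - (h a - h b) mod p = (h b - h a) mod p"
    using zmod_zminus1_eq_if[of "h a - h b" p] by simp
  then show ?thesis unfolding phi_step_def phi_arc_def by simp
qed

lemma phi_path_Cons_Cons:
  "phi_path p ori h (a # b # r) = phi_step p ori h a b + phi_path p ori h (b # r)"
  unfolding phi_path_def by (simp add: sum.lessThan_Suc_shift del: sum.lessThan_Suc)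

lemma phi_path_cong:
  assumes "\<And>x. x \<in> set xs \<Longrightarrow> h' x = h x"
  shows "phi_path p ori h' xs = phi_path p ori h xs"
  unfolding phi_path_def phi_step_def phi_arc_def using assms by (intro sum.cong) auto

lemma is_uv_path_subset:
  assumes sg: "simple_graph V E" and "is_uv_path E u v xs" and "u \<in> V"
  shows "set xs \<subseteq> V"
proof -
  have "set ys \<subseteq> V" if "successively E ys" "hd ys \<in> V" for ys
    using that sg by (induction ys rule: induct_list012) (auto simp: simple_graph_def)
  then show ?thesis using assms(2,3) by (simp add: is_uv_path_def is_path_iff_successively)
qed

lemma phi_path_recolour_inner:
  assumes sg: "simple_graph V E" and q: "0 < q" "p < 4 * q"
    and h: "pq_colouring p q V E h" and h': "pq_colouring p q V E h'"
    and agree: "\<forall>v\<in>V. v \<noteq> w \<longrightarrow> h' v = h v"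
  shows "successively E xs \<Longrightarrow> distinct xs \<Longrightarrow> hd xs \<noteq> w \<Longrightarrow> last xs \<noteq> w \<Longrightarrow>
    phi_path p ori h' xs = phi_path p ori h xs"
proof (induction xs rule: induct_list012)
  case (3 x y zs)
  have xy: "E x y" using "3.prems"(1) by simp
  have hx: "h' x = h x"
    using agree simple_graph_edge(1)[OF sg xy] "3.prems"(3) by simp
  have steps: "phi_step p ori h' x y = (h' y - h x) mod p"
    "phi_step p ori h x y = (h y - h x) mod p"
    using phi_step_edge[OF h' xy q(1)] phi_step_edge[OF h xy q(1)] hx by simp_all
  show ?case
  proof (cases "y = w")
    case True
    then obtain c zs' where zs: "zs = c # zs'" using "3.prems"(4) by (cases zs) auto
    have yc: "E y c" using "3.prems"(1) zs by simp
    have "c \<noteq> w" using "3.prems"(2) zs True by auto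
    then have hc: "h' c = h c" using agree simple_graph_edge(2)[OF sg yc] by simp
    have "(h' w - h x) mod p + (h c - h' w) mod p = (h w - h x) mod p + (h c - h w) mod p"
      using True q pq_colouring_edge[OF h xy] pq_colouring_edge[OF h yc]
        pq_colouring_edge[OF h' xy] pq_colouring_edge[OF h' yc] hx hc
      by (intro gap_sum_independent_of_middle) simp_all
    moreover have "phi_path p ori h' zs = phi_path p ori h zs"
      using "3.IH"(1) "3.prems" zs \<open>c \<noteq> w\<close> by simp
    ultimately show ?thesis
      using steps True zs phi_step_edge[OF h' yc q(1)] phi_step_edge[OF h yc q(1)] hc
      by (simp add: phi_path_Cons_Cons)
  next
    case False
    then have "h' y = h y" using agree simple_graph_edge(2)[OF sg xy] by simp
    moreover have "phi_path p ori h' (y # zs) = phi_path p ori h (y # zs)"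
      using "3.IH"(2) "3.prems" False by simp
    ultimately show ?thesis using steps by (simp add: phi_path_Cons_Cons)
  qed
qed (simp_all add: phi_path_def)

lemma phi_path_recolour_first:
  assumes sg: "simple_graph V E" and q: "0 < q" "p < 4 * q"
    and h: "pq_colouring p q V E h" and h': "pq_colouring p q V E h'"
    and agree: "\<forall>v\<in>V. v \<noteq> w \<longrightarrow> h' v = h v"
    and path: "successively E (w # y # r)" "distinct (w # y # r)"
  shows "phi_path p ori h' (w # y # r)
    = phi_path p ori h (w # y # r) + ((h y - h' w) mod p - (h y - h w) mod p)"
proof -
  have wy: "E w y" using path(1) by simp
  have "h' y = h y" using agree simple_graph_edge[OF sg wy] by simp
  moreover have "last (y # r) \<noteq> w"
    using path(2) last_in_set[of "y # r"] by auto
  then have "phi_path p ori h' (y # r) = phi_path p ori h (y # r)"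
    using path by (intro phi_path_recolour_inner[OF sg q h h' agree]) auto
  ultimately show ?thesis
    using phi_step_edge[OF h' wy q(1)] phi_step_edge[OF h wy q(1)]
    by (simp add: phi_path_Cons_Cons)
qed

lemma recolouring_root_shifts_phi_paths_uniformly:
  assumes sg: "simple_graph V E" and q: "0 < q" "p < 4 * q"
    and h: "pq_colouring p q V E h" and h': "pq_colouring p q V E h'"
    and agree: "\<forall>v\<in>V. v \<noteq> u \<longrightarrow> h' v = h v"
    and paths: "\<And>v. v \<in> F \<Longrightarrow> is_uv_path E u v (P v)" and "u \<notin> F"
  shows "\<exists>\<delta>. \<forall>v\<in>F. phi_path p ori h' (P v) = phi_path p ori h (P v) + \<delta>"
proof -
  \<comment> \<open>only the first edge of each path changes, and its change does not depend on the path\<close>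
  define shift where "shift y = (h y - h' u) mod p - (h y - h u) mod p" for y
  have first_edge: "\<exists>y. E u y \<and> phi_path p ori h' (P v) = phi_path p ori h (P v) + shift y"
    if vF: "v \<in> F" for v
  proof -
    have Pv: "successively E (P v)" "distinct (P v)" "P v \<noteq> []" "hd (P v) = u" "last (P v) = v"
      using paths[OF vF] by (auto simp: is_uv_path_def is_path_iff_successively)
    moreover have "u \<noteq> v" using \<open>u \<notin> F\<close> vF by blast
    ultimately obtain m where "P v = u # m @ [v]" by (elim hd_last_split)
    then obtain y r where Pyr: "P v = u # y # r" by (cases "m @ [v]") auto
    have "E u y" using Pv(1) Pyr by simp
    moreover have "phi_path p ori h' (P v) = phi_path p ori h (P v) + shift y"
      using Pv(1,2) unfolding Pyr shift_def
      by (rule phi_path_recolour_first[OF sg q h h' agree])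
    ultimately show ?thesis by blast
  qed
  have shift_eq: "shift y = shift z" if "E u y" "E u z" for y z
  proof -
    have "h' y = h y" "h' z = h z"
      using agree simple_graph_edge[OF sg that(1)] simple_graph_edge[OF sg that(2)] by auto
    then show ?thesis
      unfolding shift_def using q pq_colouring_edge[OF h that(1)] pq_colouring_edge[OF h that(2)]
        pq_colouring_edge[OF h' that(1)] pq_colouring_edge[OF h' that(2)]
      by (intro gap_difference_independent_of_end) simp_all
  qed
  show ?thesis
  proof (cases "F = {}")
    case False
    then obtain y0 where "E u y0" using first_edge by blast
    have "phi_path p ori h' (P v) = phi_path p ori h (P v) + shift y0" if "v \<in> F" for v
      using first_edge[OF that] shift_eq[OF _ \<open>E u y0\<close>] by metis
    then show ?thesis by blast
  qed simp
qed

lemma recolouring_shifts_phi_paths_uniformly: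
  assumes sg: "simple_graph V E" and q: "0 < q" "p < 4 * q"
    and h: "pq_colouring p q V E h" and h': "pq_colouring p q V E h'"
    and agree: "\<forall>v\<in>V. v \<noteq> w \<longrightarrow> h' v = h v"
    and u: "u \<in> V" and paths: "\<And>v. v \<in> F \<Longrightarrow> is_uv_path E u v (P v)"
    and fixed: "\<forall>v\<in>F. h' v = h v"
  shows "\<exists>\<delta>. \<forall>v\<in>F. phi_path p ori h' (P v) = phi_path p ori h (P v) + \<delta>"
proof (cases "\<forall>v\<in>V. h' v = h v")
  case True
  have "phi_path p ori h' (P v) = phi_path p ori h (P v)" if "v \<in> F" for v
    using True is_uv_path_subset[OF sg paths[OF that] u] by (intro phi_path_cong) auto
  then show ?thesis by (intro exI[of _ 0]) simp
next
  case False
  then have "w \<notin> F" using agree fixed by auto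
  show ?thesis
  proof (cases "w = u")
    case True
    then show ?thesis
      using recolouring_root_shifts_phi_paths_uniformly[OF sg q h h' _ paths] agree \<open>w \<notin> F\<close>
      by simp
  next
    case False
    have "phi_path p ori h' (P v) = phi_path p ori h (P v)" if "v \<in> F" for v
      using paths[OF that] False \<open>w \<notin> F\<close> that
      by (intro phi_path_recolour_inner[OF sg q h h' agree])
        (auto simp: is_uv_path_def is_path_iff_successively)
    then show ?thesis by (intro exI[of _ 0]) simp
  qed
qed

section \<open>Directed cycles of \<open>D\<^sub>f\<close> and reconfiguration\<close>

text \<open>Like \<open>has_dicycle_in\<close>, but without distinctness, which the argument never uses.\<close>

definition closed_diwalk :: "('a \<Rightarrow> 'a \<Rightarrow> bool) \<Rightarrow> 'a list \<Rightarrow> bool" where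
  "closed_diwalk D cs \<longleftrightarrow> 2 \<le> length cs \<and> successively D cs \<and> D (last cs) (hd cs)"

lemma has_dicycle_in_closed_diwalk:
  assumes "has_dicycle_in D S"
  obtains cs where "closed_diwalk D cs" and "set cs \<subseteq> S"
  using assms unfolding has_dicycle_in_def closed_diwalk_def successively_conv_nth by blast

lemma closed_diwalk_neighbours:
  assumes cs: "closed_diwalk D cs" and w: "w \<in> set cs"
  obtains x y where "x \<in> set cs" "D x w" "y \<in> set cs" "D w y"
proof -
  obtain a b where ab: "cs = a @ w # b" using w split_list by metis
  have "successively D cs" "D (last cs) (hd cs)" "cs \<noteq> []"
    using cs unfolding closed_diwalk_def by auto
  have "\<exists>x\<in>set cs. D x w"
  proof (cases "a = []")
    case True
    then have "hd cs = w" using ab by simp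
    then show ?thesis using \<open>D (last cs) (hd cs)\<close> last_in_set[OF \<open>cs \<noteq> []\<close>] by metis
  next
    case False
    then show ?thesis
      using \<open>successively D cs\<close> ab by (auto simp: successively_append_iff)
  qed
  moreover have "\<exists>y\<in>set cs. D w y"
  proof (cases b)
    case Nil
    then have "last cs = w" using ab by simp
    then show ?thesis using \<open>D (last cs) (hd cs)\<close> hd_in_set[OF \<open>cs \<noteq> []\<close>] by metis
  next
    case (Cons c b')
    then show ?thesis
      using \<open>successively D cs\<close> ab by (auto simp: successively_append_iff)
  qed
  ultimately show ?thesis using that by blast
qed

lemma closed_diwalk_subset:
  assumes sg: "simple_graph V E" and cs: "closed_diwalk (Df_arc p q E f) cs"
  shows "set cs \<subseteq> V"
proof
  fix v assume "v \<in> set cs"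
  then obtain y where "Df_arc p q E f v y" using closed_diwalk_neighbours[OF cs] by metis
  then show "v \<in> V" using simple_graph_edge(1)[OF sg] by (auto simp: Df_arc_def)
qed

lemma Df_arc_colour_step:
  assumes "Df_arc p q E f x y" and "0 < q" "q < p"
  shows "(f y - f x) mod p = q"
  using assms unfolding Df_arc_def by simp

lemma closed_diwalk_vertex_frozen:
  assumes sg: "simple_graph V E" and q: "0 < q" "2 * q \<le> p" "p < 4 * q"
    and f: "pq_colouring p q V E f" and h: "pq_colouring p q V E h"
    and cs: "closed_diwalk (Df_arc p q E f) cs" and w: "w \<in> set cs"
    and others: "\<forall>v\<in>set cs. v \<noteq> w \<longrightarrow> h v = f v"
  shows "h w = f w"
proof -
  obtain x y where x: "x \<in> set cs" "Df_arc p q E f x w" and y: "y \<in> set cs" "Df_arc p q E f w y"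
    using closed_diwalk_neighbours[OF cs w] by blast
  then have xw: "E x w" and wy: "E w y" by (auto simp: Df_arc_def)
  then have "x \<noteq> w" "y \<noteq> w" "w \<in> V" using simple_graph_edge[OF sg] by blast+
  then have "h x = f x" "h y = f y" using others x y by auto
  then show ?thesis
    using q Df_arc_colour_step[OF x(2)] Df_arc_colour_step[OF y(2)]
      pq_colouring_edge[OF f xw] pq_colouring_edge[OF f wy]
      pq_colouring_edge[OF h xw] pq_colouring_edge[OF h wy]
      pq_colouring_range[OF f \<open>w \<in> V\<close>] pq_colouring_range[OF h \<open>w \<in> V\<close>]
    by (intro colour_between_q_steps_unique[of q p "f w" "f x" "f y" "h w"]) auto
qed

lemma recol_step_single_vertex:
  assumes "finite V" and "recol_step p q V E h h'"
  obtains w where "\<forall>v\<in>V. v \<noteq> w \<longrightarrow> h' v = h v"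
proof -
  let ?S = "{v\<in>V. h v \<noteq> h' v}"
  have "card ?S \<le> Suc 0" using assms(2) unfolding recol_step_def by simp
  then have single: "\<forall>a\<in>?S. \<forall>b\<in>?S. a = b"
    using card_le_Suc0_iff_eq[of ?S] assms(1) by simp
  show ?thesis
  proof (cases "?S = {}")
    case True
    then have "\<forall>v\<in>V. v \<noteq> u \<longrightarrow> h' v = h v" for u by auto
    then show ?thesis by (rule that)
  next
    case False
    then obtain w where "w \<in> ?S" by blast
    have "h' v = h v" if "v \<in> V" "v \<noteq> w" for v
    proof (rule ccontr)
      assume "h' v \<noteq> h v"
      with that have "v \<in> ?S" by simp
      with single \<open>w \<in> ?S\<close> \<open>v \<noteq> w\<close> show False by blast
    qed
    then show ?thesis using that by blast
  qed
qed

lemma reconfiguration_fixes_closed_diwalks: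
  assumes sg: "simple_graph V E" and q: "0 < q" "2 * q \<le> p" "p < 4 * q"
    and f: "pq_colouring p q V E f"
    and cover: "\<And>w. w \<in> F \<Longrightarrow> \<exists>cs. closed_diwalk (Df_arc p q E f) cs \<and> w \<in> set cs \<and> set cs \<subseteq> F"
    and "(recol_step p q V E)\<^sup>*\<^sup>* f g"
  shows "\<forall>v\<in>F. g v = f v"
  using assms(7)
proof (induction rule: rtranclp_induct)
  case (step h h')
  have h': "pq_colouring p q V E h'" using step.hyps(2) by (simp add: recol_step_def)
  obtain w where agree: "\<forall>v\<in>V. v \<noteq> w \<longrightarrow> h' v = h v"
    using sg recol_step_single_vertex[OF _ step.hyps(2)] unfolding simple_graph_def by blast
  have FV: "F \<subseteq> V" using cover closed_diwalk_subset[OF sg] by blast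
  have others: "h' v = f v" if "v \<in> F" "v \<noteq> w" for v
    using agree step.IH FV that by auto
  show ?case
  proof
    fix v assume "v \<in> F"
    show "h' v = f v"
    proof (cases "v = w")
      case True
      obtain cs where "closed_diwalk (Df_arc p q E f) cs" "v \<in> set cs" "set cs \<subseteq> F"
        using cover \<open>v \<in> F\<close> by blast
      then show ?thesis
        using closed_diwalk_vertex_frozen[OF sg q f h'] others True by blast
    qed (use others \<open>v \<in> F\<close> in blast)
  qed
qed simp

lemma reconfiguration_shifts_phi_paths_uniformly:
  assumes sg: "simple_graph V E" and q: "0 < q" "2 * q \<le> p" "p < 4 * q"
    and f: "pq_colouring p q V E f"
    and cover: "\<And>w. w \<in> F \<Longrightarrow> \<exists>cs. closed_diwalk (Df_arc p q E f) cs \<and> w \<in> set cs \<and> set cs \<subseteq> F"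
    and u: "u \<in> V" and paths: "\<And>v. v \<in> F \<Longrightarrow> is_uv_path E u v (P v)"
    and "(recol_step p q V E)\<^sup>*\<^sup>* f g"
  shows "\<exists>\<Delta>. \<forall>v\<in>F. phi_path p ori g (P v) = phi_path p ori f (P v) + \<Delta>"
  using assms(9)
proof (induction rule: rtranclp_induct)
  case base
  then show ?case by (intro exI[of _ 0]) simp
next
  case (step h h')
  have h: "pq_colouring p q V E h" and h': "pq_colouring p q V E h'"
    using step.hyps(2) by (simp_all add: recol_step_def)
  obtain w where agree: "\<forall>v\<in>V. v \<noteq> w \<longrightarrow> h' v = h v"
    using sg recol_step_single_vertex[OF _ step.hyps(2)] unfolding simple_graph_def by blast
  have "(recol_step p q V E)\<^sup>*\<^sup>* f h'"
    by (rule rtranclp.rtrancl_into_rtrancl[of "recol_step p q V E", OF step.hyps])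
  then have "\<forall>v\<in>F. h v = f v" "\<forall>v\<in>F. h' v = f v"
    using reconfiguration_fixes_closed_diwalks[where F = F, OF sg q f cover] step.hyps(1)
    by blast+
  then have "\<forall>v\<in>F. h' v = h v" by simp
  then obtain \<delta> where "\<forall>v\<in>F. phi_path p ori h' (P v) = phi_path p ori h (P v) + \<delta>"
    using recolouring_shifts_phi_paths_uniformly[where F = F and P = P,
        OF sg q(1,3) h h' agree u paths]
    by blast
  with step.IH show ?case by (metis add.assoc)
qed

theorem lemma2p9:
  fixes p q :: int and V :: "'a set" and E ori T :: "'a \<Rightarrow> 'a \<Rightarrow> bool"
    and f g :: "'a \<Rightarrow> int" and u :: 'a
  assumes "0 < q" and "2 * q \<le> p" and "p < 4 * q"
    and "simple_graph V E" and "connected_graph V E"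
    and "orientation E ori"
    and "pq_colouring p q V E f" and "pq_colouring p q V E g"
    and "spanning_tree V E T" and "u \<in> V"
    and "X = {v\<in>V. wt p ori T u f v \<le> wt p ori T u g v}"
    and "has_dicycle_in (Df_arc p q E f) X"
    and "has_dicycle_in (Df_arc p q E f) (V - X)"
  shows "\<not> reconfigures p q V E f g"
proof
  assume "reconfigures p q V E f g"
  obtain C1 where C1: "closed_diwalk (Df_arc p q E f) C1" "set C1 \<subseteq> X"
    using assms(12) by (rule has_dicycle_in_closed_diwalk)
  obtain C2 where C2: "closed_diwalk (Df_arc p q E f) C2" "set C2 \<subseteq> V - X"
    using assms(13) by (rule has_dicycle_in_closed_diwalk)
  define F where "F = set C1 \<union> set C2"
  define P where "P v = (THE xs. is_uv_path T u v xs)" for v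
  have "\<exists>\<Delta>. \<forall>v\<in>F. phi_path p ori g (P v) = phi_path p ori f (P v) + \<Delta>"
  proof (rule reconfiguration_shifts_phi_paths_uniformly[OF assms(4,1-3,7) _ assms(10)])
    show "\<exists>cs. closed_diwalk (Df_arc p q E f) cs \<and> w \<in> set cs \<and> set cs \<subseteq> F" if "w \<in> F" for w
      using that C1(1) C2(1) unfolding F_def by blast
    show "is_uv_path E u v (P v)" if "v \<in> F" for v
      using that C1(2) C2(2) assms(11) spanning_tree_path[OF assms(9,10)]
      unfolding F_def P_def by blast
    show "(recol_step p q V E)\<^sup>*\<^sup>* f g" using \<open>reconfigures p q V E f g\<close> by (simp add: reconfigures_def)
  qed
  then obtain \<Delta> where \<Delta>: "\<forall>v\<in>F. phi_path p ori g (P v) = phi_path p ori f (P v) + \<Delta>" ..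
  have "C1 \<noteq> []" "C2 \<noteq> []" using C1(1) C2(1) unfolding closed_diwalk_def by auto
  then have "hd C1 \<in> F \<inter> X" "hd C2 \<in> F \<inter> (V - X)"
    using C1(2) C2(2) hd_in_set unfolding F_def by blast+
  then have "wt p ori T u f (hd C1) \<le> wt p ori T u g (hd C1)"
    "\<not> wt p ori T u f (hd C2) \<le> wt p ori T u g (hd C2)"
    "wt p ori T u g (hd C1) = wt p ori T u f (hd C1) + \<Delta>"
    "wt p ori T u g (hd C2) = wt p ori T u f (hd C2) + \<Delta>"
    using assms(11) \<Delta> unfolding wt_def P_def by blast+
  then show False by linarith
qed

end
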